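(* Let $\mathbf v=(v_1,\dots,v_m)$ and $\mathbf k=(k_1,\dots,k_m)$ be $m$-tuples of positive integers with $\mathbf v\ge\mathbf k$, and let $\mathbf r=(r_1,\dots,r_m)$ be a tuple of integers with $0\le r_i\le k_i-2$ for all $i$. Then $C(\mathbf v,\mathbf k,2)\le C(\mathbf v-\mathbf r,\mathbf k-\mathbf r,2)$.
   Context: For $m$-tuples $\mathbf a,\mathbf b$ of positive integers with $\mathbf b\le\mathbf a$ entrywise: let $X_1,\dots,X_m$ be pairwise disjoint sets with $|X_i|=a_i$; a block is an $m$-tuple $(B_1,\dots,B_m)$ with $B_i\subseteq X_i$, $|B_i|=b_i$; an $m$-tuple of sets $(T_1,\dots,T_m)$ is $(\mathbf a,\mathbf b,2)$-admissible if $T_i\subseteq X_i$, $|T_i|\le b_i$ and $\sum|T_i|=2$, and is contained in a block if $T_i\subseteq B_i$ for all $i$. A ${\rm GC}(\mathbf a,\mathbf b,2)$ is a finite family (repetitions allowed) of blocks containing every admissible tuple in at least one block; $C(\mathbf a,\mathbf b,2)$ is the minimum number of blocks. Vector subtraction is entrywise. *)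

theory Defs
  imports Main
begin

(* The pairwise disjoint ground sets
   X_1..X_m are realised concretely: X_i is a copy of {0..<a_i}, indexed by i,
   so an m-tuple of subsets (S_1..S_m) is a function S :: nat => nat set with
   S i \<subseteq> {..<a!i} for i < m (and S i = {} for i >= m). *)

definition is_block :: "nat list \<Rightarrow> nat list \<Rightarrow> (nat \<Rightarrow> nat set) \<Rightarrow> bool" where
  "is_block a b B \<longleftrightarrow>
     (\<forall>i < length a. B i \<subseteq> {..<a!i} \<and> card (B i) = b!i) \<and>
     (\<forall>i \<ge> length a. B i = {})"

definition admissible2 :: "nat list \<Rightarrow> nat list \<Rightarrow> (nat \<Rightarrow> nat set) \<Rightarrow> bool" where
  "admissible2 a b T \<longleftrightarrow>
     (\<forall>i < length a. T i \<subseteq> {..<a!i} \<and> card (T i) \<le> b!i) \<and>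
     (\<forall>i \<ge> length a. T i = {}) \<and>
     (\<Sum>i<length a. card (T i)) = 2"

definition contained_in :: "nat list \<Rightarrow> (nat \<Rightarrow> nat set) \<Rightarrow> (nat \<Rightarrow> nat set) \<Rightarrow> bool" where
  "contained_in a T B \<longleftrightarrow> (\<forall>i < length a. T i \<subseteq> B i)"

(* A GC(a,b,2): a finite family of blocks (a list, so repetitions allowed)
   containing every admissible tuple in at least one block. *)
definition is_GC2 :: "nat list \<Rightarrow> nat list \<Rightarrow> (nat \<Rightarrow> nat set) list \<Rightarrow> bool" where
  "is_GC2 a b F \<longleftrightarrow>
     (\<forall>B \<in> set F. is_block a b B) \<and>
     (\<forall>T. admissible2 a b T \<longrightarrow> (\<exists>B \<in> set F. contained_in a T B))"

definition C2 :: "nat list \<Rightarrow> nat list \<Rightarrow> nat" where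
  "C2 a b = (LEAST n. \<exists>F. is_GC2 a b F \<and> length F = n)"

end

theory Submission imports Defs begin

text \<open>Take a minimum covering for \<open>(v - r, k - r)\<close>, whose ground sets are the first \<open>v\<^sub>i - r\<^sub>i\<close>
points of each \<open>X\<^sub>i\<close>, and adjoin the remaining \<open>r\<^sub>i\<close> points of \<open>X\<^sub>i\<close> to every block. An admissible pair in \<open>(v, k)\<close>, with its adjoined points
removed, has total size at most 2; since every \<open>k\<^sub>i - r\<^sub>i \<ge> 2\<close> it extends to an admissible
pair of the smaller design and is therefore covered by one of the old blocks.\<close>

lemma exists_subset_between:
  assumes "finite U" "A \<subseteq> U" "card A \<le> n" "n \<le> card U"
  shows "\<exists>S. A \<subseteq> S \<and> S \<subseteq> U \<and> card S = n"
proof -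
  have fA: "finite A" using assms finite_subset by blast
  have "n - card A \<le> card (U - A)" using assms fA by (simp add: card_Diff_subset)
  then obtain S0 where S0: "S0 \<subseteq> U - A" "card S0 = n - card A" "finite S0"
    by (rule obtain_subset_with_card_n)
  have "card (A \<union> S0) = card A + card S0"
    using S0 fA by (subst card_Un_disjoint) auto
  then show ?thesis using S0 assms by (intro exI[of _ "A \<union> S0"]) auto
qed

lemma finite_blocks: "finite {B. is_block a b B}"
proof -
  let ?g = "\<lambda>B. {(i, x). i < length a \<and> x \<in> B i}"
  have "inj_on ?g {B. is_block a b B}"
  proof (rule inj_onI)
    fix B1 B2
    assume "B1 \<in> {B. is_block a b B}" "B2 \<in> {B. is_block a b B}" "?g B1 = ?g B2"
    then have "B1 i = B2 i" for i
    proof (cases "i < length a")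
      case True
      then show ?thesis using \<open>?g B1 = ?g B2\<close> by (auto simp: set_eq_iff)
    qed (use \<open>B1 \<in> _\<close> \<open>B2 \<in> _\<close> in \<open>auto simp: is_block_def\<close>)
    then show "B1 = B2" ..
  qed
  moreover have "?g ` {B. is_block a b B} \<subseteq> Pow (SIGMA i:{..<length a}. {..<a!i})"
    by (auto simp: is_block_def)
  then have "finite (?g ` {B. is_block a b B})"
    by (rule finite_subset) auto
  ultimately show ?thesis using finite_imageD by blast
qed

text \<open>The family of all blocks is a covering.\<close>

lemma is_GC2_exists:
  assumes "length b = length a" "\<forall>i<length a. b!i \<le> a!i"
  shows "\<exists>F. is_GC2 a b F"
proof -
  obtain F where F: "set F = {B. is_block a b B}" using finite_list[OF finite_blocks] by blast
  have "\<exists>B\<in>set F. contained_in a T B" if T: "admissible2 a b T" for T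
  proof -
    have "\<forall>i<length a. \<exists>S. T i \<subseteq> S \<and> S \<subseteq> {..<a!i} \<and> card S = b!i"
      using T assms unfolding admissible2_def by (auto intro!: exists_subset_between)
    then obtain S where S: "\<forall>i<length a. T i \<subseteq> S i \<and> S i \<subseteq> {..<a!i} \<and> card (S i) = b!i"
      by metis
    let ?B = "\<lambda>i. if i < length a then S i else {}"
    have "is_block a b ?B" "contained_in a T ?B"
      using S by (auto simp: is_block_def contained_in_def)
    then show ?thesis using F by blast
  qed
  then have "is_GC2 a b F" using F by (auto simp: is_GC2_def)
  then show ?thesis ..
qed

lemma C2_le: "is_GC2 a b F \<Longrightarrow> C2 a b \<le> length F"
  unfolding C2_def by (rule Least_le) blast

lemma C2_attained:
  assumes "\<exists>F. is_GC2 a b F"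
  shows "\<exists>F. is_GC2 a b F \<and> length F = C2 a b"
  unfolding C2_def using assms by (blast intro: LeastI_ex[of "\<lambda>n. \<exists>F. is_GC2 a b F \<and> length F = n"])

lemma sum_card_le_1_concentrated:
  fixes n :: nat
  assumes "\<forall>i<n. finite (T i)" "(\<Sum>i<n. card (T i)) \<le> 1" "0 < n"
  shows "\<exists>j<n. \<forall>i<n. i \<noteq> j \<longrightarrow> T i = {}"
proof (cases "\<forall>i<n. T i = {}")
  case True
  then show ?thesis using assms(3) by blast
next
  case False
  then obtain j where j: "j < n" "T j \<noteq> {}" by blast
  have "T i = {}" if i: "i < n" "i \<noteq> j" for i
  proof -
    have "card (T i) + card (T j) = (\<Sum>l\<in>{i, j}. card (T l))" using i by simp
    also have "\<dots> \<le> (\<Sum>l<n. card (T l))" using i j by (intro sum_mono2) auto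
    moreover have "0 < card (T j)" using assms(1) j by (simp add: card_gt_0_iff)
    ultimately have "card (T i) = 0" using assms(2) by linarith
    then show ?thesis using assms(1) i by simp
  qed
  then show ?thesis using j by blast
qed

text \<open>A tuple of size below 2 is padded to a pair inside a single coordinate, which needs \<open>b\<^sub>i \<ge> 2\<close>.\<close>

lemma admissible2_superset:
  assumes "a \<noteq> []" "\<forall>i<length a. 2 \<le> b!i \<and> b!i \<le> a!i"
    and T: "\<forall>i<length a. T i \<subseteq> {..<a!i}" "\<forall>i\<ge>length a. T i = {}"
      "(\<Sum>i<length a. card (T i)) \<le> 2"
  shows "\<exists>T'. admissible2 a b T' \<and> (\<forall>i<length a. T i \<subseteq> T' i)"
proof (cases "(\<Sum>i<length a. card (T i)) = 2")
  case True
  have "card (T i) \<le> b!i" if "i < length a" for i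
  proof -
    have "card (T i) \<le> (\<Sum>i<length a. card (T i))" using that by (intro member_le_sum) auto
    with True have "card (T i) \<le> 2" by linarith
    then show ?thesis using assms(2) that by (meson order_trans)
  qed
  then have "admissible2 a b T" using T True by (auto simp: admissible2_def)
  then show ?thesis by blast
next
  case False
  have fin: "\<forall>i<length a. finite (T i)" using T(1) finite_subset by blast
  have "(\<Sum>i<length a. card (T i)) \<le> 1" using False T(3) by linarith
  moreover have "0 < length a" using assms(1) by simp
  ultimately obtain j where j: "j < length a" "\<forall>i<length a. i \<noteq> j \<longrightarrow> T i = {}"
    using sum_card_le_1_concentrated[OF fin] by blast
  have "card (T j) \<le> (\<Sum>i<length a. card (T i))" using j by (intro member_le_sum) auto
  then have "card (T j) \<le> 2" using T(3) by linarith
  moreover have "2 \<le> card {..<a!j}" "T j \<subseteq> {..<a!j}" using assms(2) T(1) j by auto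
  ultimately obtain S where S: "T j \<subseteq> S" "S \<subseteq> {..<a!j}" "card S = 2"
    using exists_subset_between[of "{..<a!j}" "T j" 2] by blast
  define T' where "T' = (\<lambda>i. if i = j then S else {})"
  have "(\<Sum>i<length a. card (T' i)) = (\<Sum>i<length a. if i = j then card S else 0)"
    by (intro sum.cong) (simp_all add: T'_def)
  also have "\<dots> = card S" using j(1) by simp
  finally have "(\<Sum>i<length a. card (T' i)) = card S" .
  moreover have "T' i \<subseteq> {..<a!i} \<and> card (T' i) \<le> b!i" if "i < length a" for i
    using S assms(2) that by (simp add: T'_def)
  moreover have "T' i = {}" if "length a \<le> i" for i
    using j(1) that by (simp add: T'_def)
  ultimately have "admissible2 a b T'"
    using S(3) unfolding admissible2_def by presburger
  moreover have "\<forall>i<length a. T i \<subseteq> T' i" using S j by (auto simp: T'_def)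
  ultimately show ?thesis by blast
qed

lemma is_GC2_covers_small_tuples:
  assumes "is_GC2 a b F" "a \<noteq> []" "\<forall>i<length a. 2 \<le> b!i \<and> b!i \<le> a!i"
    and "\<forall>i<length a. T i \<subseteq> {..<a!i}" "\<forall>i\<ge>length a. T i = {}"
      "(\<Sum>i<length a. card (T i)) \<le> 2"
  shows "\<exists>B\<in>set F. contained_in a T B"
proof -
  obtain T' where T': "admissible2 a b T'" "\<forall>i<length a. T i \<subseteq> T' i"
    using admissible2_superset[OF assms(2-)] by blast
  then obtain B where "B \<in> set F" "contained_in a T' B"
    using assms(1) unfolding is_GC2_def by blast
  then show ?thesis using T'(2) unfolding contained_in_def by blast
qed

definition adjoin_top :: "nat list \<Rightarrow> nat list \<Rightarrow> (nat \<Rightarrow> nat set) \<Rightarrow> nat \<Rightarrow> nat set" where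
  "adjoin_top a r B i = B i \<union> (if i < length a then {a!i - r!i..<a!i} else {})"

lemma is_block_adjoin_top:
  assumes "is_block (map2 (-) a r) (map2 (-) b r) B"
    and "length b = length a" "length r = length a" "\<forall>i<length a. r!i \<le> b!i \<and> b!i \<le> a!i"
  shows "is_block a b (adjoin_top a r B)"
  unfolding is_block_def
proof (intro conjI allI impI)
  fix i assume i: "i < length a"
  then have Bi: "B i \<subseteq> {..<a!i - r!i}" "card (B i) = b!i - r!i"
    using assms unfolding is_block_def by auto
  then show "adjoin_top a r B i \<subseteq> {..<a!i}" using i by (auto simp: adjoin_top_def)
  have "B i \<inter> {a!i - r!i..<a!i} = {}" "finite (B i)"
    using Bi(1) finite_subset by auto
  then have "card (adjoin_top a r B i) = card (B i) + card {a!i - r!i..<a!i}"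
    using i by (simp add: adjoin_top_def card_Un_disjoint)
  then show "card (adjoin_top a r B i) = b!i" using Bi(2) i assms(4) by fastforce
next
  fix i assume "length a \<le> i"
  then show "adjoin_top a r B i = {}" using assms(1-3) by (simp add: adjoin_top_def is_block_def)
qed

lemma is_GC2_adjoin_top:
  assumes F: "is_GC2 (map2 (-) a r) (map2 (-) b r) F"
    and len: "length b = length a" "length r = length a"
    and ineq: "\<forall>i<length a. r!i + 2 \<le> b!i \<and> b!i \<le> a!i"
  shows "is_GC2 a b (map (adjoin_top a r) F)"
  unfolding is_GC2_def
proof (intro conjI ballI allI impI)
  fix B' assume "B' \<in> set (map (adjoin_top a r) F)"
  then show "is_block a b B'"
    using F len ineq by (auto simp: is_GC2_def intro!: is_block_adjoin_top)
next
  let ?a' = "map2 (-) a r" and ?b' = "map2 (-) b r"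
  fix T assume T: "admissible2 a b T"
  then have "a \<noteq> []" by (auto simp: admissible2_def)
  define T' where "T' = (\<lambda>i. if i < length a then T i \<inter> {..<?a'!i} else {})"
  have "(\<Sum>i<length a. card (T' i)) \<le> (\<Sum>i<length a. card (T i))"
    using T by (intro sum_mono) (auto simp: T'_def admissible2_def intro!: card_mono
        intro: finite_subset)
  then have "(\<Sum>i<length ?a'. card (T' i)) \<le> 2" using T len by (simp add: admissible2_def)
  moreover have "?a' \<noteq> []" using \<open>a \<noteq> []\<close> len by (cases a; cases r) auto
  moreover have "\<forall>i<length ?a'. 2 \<le> ?b'!i \<and> ?b'!i \<le> ?a'!i" using len ineq by auto
  moreover have "\<forall>i<length ?a'. T' i \<subseteq> {..<?a'!i}" "\<forall>i\<ge>length ?a'. T' i = {}"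
    using len by (auto simp: T'_def)
  ultimately obtain B where B: "B \<in> set F" "contained_in ?a' T' B"
    using is_GC2_covers_small_tuples[OF F] by blast
  have "contained_in a T (adjoin_top a r B)"
    using B(2) T len by (fastforce simp: contained_in_def admissible2_def adjoin_top_def T'_def)
  then show "\<exists>B\<in>set (map (adjoin_top a r) F). contained_in a T B" using B(1) by auto
qed

theorem proposition3p23:
  fixes v k r :: "nat list" and m :: nat
  assumes "length v = m" and "length k = m" and "length r = m"
    and "\<forall>i < m. 0 < k!i \<and> k!i \<le> v!i"
    and "\<forall>i < m. 0 < v!i"
    and "\<forall>i < m. r!i \<le> k!i - 2 \<and> 2 \<le> k!i"
  shows "C2 v k \<le> C2 (map2 (-) v r) (map2 (-) k r)"
proof -
  have ineq: "\<forall>i<length v. r!i + 2 \<le> k!i \<and> k!i \<le> v!i" using assms by fastforce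
  have "\<exists>F. is_GC2 (map2 (-) v r) (map2 (-) k r) F"
    using assms ineq by (intro is_GC2_exists) auto
  then obtain F where F: "is_GC2 (map2 (-) v r) (map2 (-) k r) F"
    "length F = C2 (map2 (-) v r) (map2 (-) k r)"
    using C2_attained by blast
  have "is_GC2 v k (map (adjoin_top v r) F)"
    using is_GC2_adjoin_top[OF F(1)] assms(1-3) ineq by simp
  then show ?thesis using C2_le F(2) by fastforce
qed

end
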